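(* Let $R$ be an excellent normal two-dimensional local ring, $\phi:X\to\operatorname{Spec}(R)$ a resolution of singularities, and $D_1\le D_2$ effective divisors on $X$ with exceptional support, with respective anti-nef parts of their Zariski decompositions $\Delta_1$ and $\Delta_2$. Then $(\Delta_2^2)\le(\Delta_1^2)$, with equality if and only if $\Delta_1=\Delta_2$.
   Context: The intersection form on exceptional curves of $X$ is negative definite. A $\mathbb Q$-divisor $C$ with exceptional support is anti-nef if $(C\cdot E)\le0$ for all exceptional curves $E$. For an effective divisor $D$ with exceptional support, the anti-nef part $\Delta$ of its Zariski decomposition is the unique minimal effective anti-nef $\mathbb Q$-divisor with exceptional support such that $D\le\Delta$. *)

theory Defs
  imports Complex_Main
begin

text \<open>Abstract model of the exceptional locus of a resolution X of Spec R.
  Exc is the finite set of exceptional (prime) curves, M E F = (E . F) the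
  intersection numbers. Divisors with exceptional support are coefficient
  functions vanishing outside Exc (integer coefficients for divisors,
  rational ones for Q-divisors).\<close>

definition intersection_data :: "'c set \<Rightarrow> ('c \<Rightarrow> 'c \<Rightarrow> int) \<Rightarrow> bool" where
  "intersection_data Exc M \<longleftrightarrow>
     finite Exc \<and>
     (\<forall>E\<in>Exc. \<forall>F\<in>Exc. M E F = M F E) \<and>
     (\<forall>E\<in>Exc. \<forall>F\<in>Exc. E \<noteq> F \<longrightarrow> 0 \<le> M E F) \<and>
     (\<forall>x :: 'c \<Rightarrow> real. (\<exists>E\<in>Exc. x E \<noteq> 0) \<longrightarrow>
        (\<Sum>E\<in>Exc. \<Sum>F\<in>Exc. x E * x F * of_int (M E F)) < 0)"

definition exc_support :: "'c set \<Rightarrow> ('c \<Rightarrow> 'a::zero) \<Rightarrow> bool" where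
  "exc_support Exc D \<longleftrightarrow> (\<forall>E. E \<notin> Exc \<longrightarrow> D E = 0)"

definition effective :: "('c \<Rightarrow> 'a::{zero,ord}) \<Rightarrow> bool" where
  "effective D \<longleftrightarrow> (\<forall>E. 0 \<le> D E)"

definition inter_curve :: "'c set \<Rightarrow> ('c \<Rightarrow> 'c \<Rightarrow> int) \<Rightarrow> ('c \<Rightarrow> rat) \<Rightarrow> 'c \<Rightarrow> rat" where
  "inter_curve Exc M C E = (\<Sum>F\<in>Exc. C F * of_int (M F E))"

definition self_inter :: "'c set \<Rightarrow> ('c \<Rightarrow> 'c \<Rightarrow> int) \<Rightarrow> ('c \<Rightarrow> rat) \<Rightarrow> rat" where
  "self_inter Exc M C = (\<Sum>E\<in>Exc. \<Sum>F\<in>Exc. C E * C F * of_int (M E F))"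

definition anti_nef :: "'c set \<Rightarrow> ('c \<Rightarrow> 'c \<Rightarrow> int) \<Rightarrow> ('c \<Rightarrow> rat) \<Rightarrow> bool" where
  "anti_nef Exc M C \<longleftrightarrow> (\<forall>E\<in>Exc. inter_curve Exc M C E \<le> 0)"

text \<open>Delta is the anti-nef part of the Zariski decomposition of D: the unique
  minimal (= least) effective anti-nef Q-divisor with exceptional support that
  is \<ge> D.\<close>
definition antinef_part :: "'c set \<Rightarrow> ('c \<Rightarrow> 'c \<Rightarrow> int) \<Rightarrow> ('c \<Rightarrow> int) \<Rightarrow> ('c \<Rightarrow> rat) \<Rightarrow> bool" where
  "antinef_part Exc M D \<Delta> \<longleftrightarrow>
     exc_support Exc \<Delta> \<and> effective \<Delta> \<and> anti_nef Exc M \<Delta> \<and> (\<forall>E. of_int (D E) \<le> \<Delta> E) \<and>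
     (\<forall>\<Delta>'. exc_support Exc \<Delta>' \<and> effective \<Delta>' \<and> anti_nef Exc M \<Delta>' \<and> (\<forall>E. of_int (D E) \<le> \<Delta>' E)
        \<longrightarrow> (\<forall>E. \<Delta> E \<le> \<Delta>' E))"

end

theory Submission
  imports Defs
begin

text \<open>By minimality \<Delta>1 \<le> \<Delta>2, so \<Delta>2 = \<Delta>1 + B with B effective, and
  (\<Delta>2 . \<Delta>2) = (\<Delta>1 . \<Delta>1) + 2 (\<Delta>1 . B) + (B . B). The middle term is \<le> 0 because \<Delta>1 is
  anti-nef and B effective, the last one is \<le> 0 by negative definiteness and
  vanishes only for B = 0.\<close>

definition inter_form :: "'c set \<Rightarrow> ('c \<Rightarrow> 'c \<Rightarrow> int) \<Rightarrow> ('c \<Rightarrow> rat) \<Rightarrow> ('c \<Rightarrow> rat) \<Rightarrow> rat" where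
  "inter_form Exc M C D = (\<Sum>E\<in>Exc. \<Sum>F\<in>Exc. C E * D F * of_int (M E F))"

lemma self_inter_eq_inter_form: "self_inter Exc M C = inter_form Exc M C C"
  by (simp add: self_inter_def inter_form_def)

lemma inter_form_commute:
  assumes "\<forall>E\<in>Exc. \<forall>F\<in>Exc. M E F = M F E"
  shows "inter_form Exc M B C = inter_form Exc M C B"
proof -
  have "inter_form Exc M B C = (\<Sum>F\<in>Exc. \<Sum>E\<in>Exc. B E * C F * of_int (M E F))"
    unfolding inter_form_def by (rule sum.swap)
  also have "\<dots> = inter_form Exc M C B"
    unfolding inter_form_def using assms by (intro sum.cong refl) (simp add: mult.commute)
  finally show ?thesis .
qed

lemma self_inter_add:
  assumes "\<forall>E\<in>Exc. \<forall>F\<in>Exc. M E F = M F E"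
  shows "self_inter Exc M (\<lambda>E. C E + B E)
           = self_inter Exc M C + 2 * inter_form Exc M C B + self_inter Exc M B"
proof -
  have "self_inter Exc M (\<lambda>E. C E + B E)
          = self_inter Exc M C + inter_form Exc M C B + inter_form Exc M B C + self_inter Exc M B"
    by (simp add: self_inter_eq_inter_form inter_form_def algebra_simps sum.distrib)
  then show ?thesis
    using inter_form_commute[OF assms, of B C] by simp
qed

lemma inter_form_eq_sum_inter_curve:
  "inter_form Exc M C B = (\<Sum>F\<in>Exc. B F * inter_curve Exc M C F)"
proof -
  have "inter_form Exc M C B = (\<Sum>F\<in>Exc. \<Sum>E\<in>Exc. C E * B F * of_int (M E F))"
    unfolding inter_form_def by (rule sum.swap)
  then show ?thesis
    unfolding inter_curve_def by (simp add: sum_distrib_left algebra_simps)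
qed

lemma inter_form_nonpos_if_anti_nef:
  assumes "anti_nef Exc M C" and "\<forall>E\<in>Exc. 0 \<le> B E"
  shows "inter_form Exc M C B \<le> 0"
  unfolding inter_form_eq_sum_inter_curve
proof (rule sum_nonpos)
  fix F assume "F \<in> Exc"
  with assms have "inter_curve Exc M C F \<le> 0" and "0 \<le> B F"
    unfolding anti_nef_def by auto
  then show "B F * inter_curve Exc M C F \<le> 0" by (simp add: mult_nonneg_nonpos)
qed

lemma self_inter_neg_if_nonzero:
  assumes "intersection_data Exc M" and "\<exists>E\<in>Exc. B E \<noteq> 0"
  shows "self_inter Exc M B < 0"
proof -
  let ?x = "\<lambda>E. real_of_rat (B E)"
  have "(\<Sum>E\<in>Exc. \<Sum>F\<in>Exc. ?x E * ?x F * of_int (M E F)) < 0"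
    using assms unfolding intersection_data_def by auto
  moreover have "real_of_rat (self_inter Exc M B)
                   = (\<Sum>E\<in>Exc. \<Sum>F\<in>Exc. ?x E * ?x F * of_int (M E F))"
    unfolding self_inter_def by (simp add: of_rat_sum of_rat_mult)
  ultimately have "real_of_rat (self_inter Exc M B) < 0" by simp
  then show ?thesis by (simp add: of_rat_less_0_iff)
qed

lemma self_inter_nonpos:
  assumes "intersection_data Exc M"
  shows "self_inter Exc M B \<le> 0"
proof (cases "\<exists>E\<in>Exc. B E \<noteq> 0")
  case True
  with self_inter_neg_if_nonzero[OF assms] show ?thesis by fastforce
next
  case False
  then show ?thesis by (simp add: self_inter_def)
qed

lemma self_inter_antimono_anti_nef:
  assumes "intersection_data Exc M" and "anti_nef Exc M C" and "\<forall>E. C E \<le> C' E"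
  shows "self_inter Exc M C' \<le> self_inter Exc M C"
    and "self_inter Exc M C' = self_inter Exc M C \<Longrightarrow> \<forall>E\<in>Exc. C E = C' E"
proof -
  define B where "B = (\<lambda>E. C' E - C E)"
  have "\<forall>E\<in>Exc. \<forall>F\<in>Exc. M E F = M F E"
    using assms(1) unfolding intersection_data_def by blast
  then have expand: "self_inter Exc M C'
                       = self_inter Exc M C + 2 * inter_form Exc M C B + self_inter Exc M B"
    using self_inter_add[of Exc M C B] by (simp add: B_def)
  have cross: "inter_form Exc M C B \<le> 0"
    using assms(2,3) by (intro inter_form_nonpos_if_anti_nef) (simp_all add: B_def)
  have square: "self_inter Exc M B \<le> 0"
    using self_inter_nonpos[OF assms(1)] .
  show "self_inter Exc M C' \<le> self_inter Exc M C"
    using expand cross square by simp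
  assume "self_inter Exc M C' = self_inter Exc M C"
  with expand cross square have "self_inter Exc M B = 0" by simp
  with self_inter_neg_if_nonzero[OF assms(1), of B] show "\<forall>E\<in>Exc. C E = C' E"
    by (fastforce simp: B_def)
qed

lemma antinef_part_mono:
  assumes "\<forall>E. D1 E \<le> D2 E"
    and "antinef_part Exc M D1 \<Delta>1" and "antinef_part Exc M D2 \<Delta>2"
  shows "\<forall>E. \<Delta>1 E \<le> \<Delta>2 E"
proof -
  have "\<forall>E. of_int (D1 E) \<le> \<Delta>2 E"
    using assms(1,3) unfolding antinef_part_def by (meson of_int_le_iff order_trans)
  with assms(2,3) show ?thesis
    unfolding antinef_part_def by blast
qed

lemma exc_support_eqI:
  assumes "exc_support Exc C" and "exc_support Exc C'" and "\<forall>E\<in>Exc. C E = C' E"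
  shows "C = C'"
  using assms unfolding exc_support_def by (metis ext)

theorem corollary5p3:
  fixes Exc :: "'c set" and M :: "'c \<Rightarrow> 'c \<Rightarrow> int"
    and D1 D2 :: "'c \<Rightarrow> int" and \<Delta>1 \<Delta>2 :: "'c \<Rightarrow> rat"
  assumes "intersection_data Exc M"
    and "exc_support Exc D1" "effective D1"
    and "exc_support Exc D2" "effective D2"
    and "\<forall>E. D1 E \<le> D2 E"
    and "antinef_part Exc M D1 \<Delta>1"
    and "antinef_part Exc M D2 \<Delta>2"
  shows "self_inter Exc M \<Delta>2 \<le> self_inter Exc M \<Delta>1
         \<and> (self_inter Exc M \<Delta>2 = self_inter Exc M \<Delta>1 \<longleftrightarrow> \<Delta>1 = \<Delta>2)"
proof -
  have le: "\<forall>E. \<Delta>1 E \<le> \<Delta>2 E"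
    using antinef_part_mono assms(6-8) .
  have anti_nef: "anti_nef Exc M \<Delta>1"
    and supports: "exc_support Exc \<Delta>1" "exc_support Exc \<Delta>2"
    using assms(7,8) unfolding antinef_part_def by blast+
  note antimono = self_inter_antimono_anti_nef[OF assms(1) anti_nef le]
  have "self_inter Exc M \<Delta>2 = self_inter Exc M \<Delta>1 \<Longrightarrow> \<Delta>1 = \<Delta>2"
    using antimono(2) exc_support_eqI[OF supports] by blast
  with antimono(1) show ?thesis by auto
qed

end
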